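(* In the formal power series ring $\mathbb Q[[u,v,z]]$, $$\sum_{k,l,n\geq 0}\{E_kE_l\}_n\,u^kv^lz^n=\frac{(1+z)(1+uvz)}{(1-uz)(1-vz)}.$$
   Context: For $i\geq1$, $X_i$ is the class function with $X_i(\sigma)$ = number of $i$-cycles of $\sigma$. For a partition $\alpha=1^{a_1}2^{a_2}\cdots$ ($a_i$ = number of parts equal to $i$, $|\alpha|=\sum ia_i$, $l(\alpha)=\sum a_i$) let $\binom X\alpha=\prod_i\binom{X_i}{a_i}$. For $l\geq0$ let $E_l=\sum_{\alpha\vdash l}(-1)^{|\alpha|-l(\alpha)}\binom X\alpha\in\mathbb C[X_1,X_2,\dotsc]$ (the character polynomial of $\bigwedge^l\mathbb C^n$; $E_0=1$). For $p\in\mathbb C[X_1,X_2,\dotsc]$ the signed moment is $\{p\}_n=\frac1{n!}\sum_{\sigma\in S_n}\mathrm{sgn}(\sigma)p(X_1(\sigma),X_2(\sigma),\dotsc)$, $n\geq0$. *)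

theory Defs
  imports "HOL-Combinatorics.Permutations" "HOL-Computational_Algebra.Formal_Power_Series"
begin

definition cycle_count :: "(nat \<Rightarrow> nat) \<Rightarrow> nat \<Rightarrow> nat \<Rightarrow> nat" where
  "cycle_count \<sigma> n i =
     card {C. \<exists>x<n. C = {(\<sigma> ^^ k) x | k. True} \<and> card C = i}"

text \<open>Partitions of l, encoded by multiplicity functions a (a i = number of parts equal to i).\<close>
definition partition_mults :: "nat \<Rightarrow> (nat \<Rightarrow> nat) set" where
  "partition_mults l = {a. (\<forall>i. a i \<noteq> 0 \<longrightarrow> 1 \<le> i \<and> i \<le> l) \<and> (\<Sum>i=1..l. i * a i) = l}"

definition num_parts :: "nat \<Rightarrow> (nat \<Rightarrow> nat) \<Rightarrow> nat" where
  "num_parts l a = (\<Sum>i=1..l. a i)"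

text \<open>The character polynomial E_l, as a function of the values X = (X_1, X_2, ...).\<close>
definition charE :: "nat \<Rightarrow> (nat \<Rightarrow> nat) \<Rightarrow> rat" where
  "charE l X = (\<Sum>a\<in>partition_mults l.
      (-1) ^ (l - num_parts l a) * (\<Prod>i=1..l. of_nat (X i choose a i)))"

definition signed_moment :: "((nat \<Rightarrow> nat) \<Rightarrow> rat) \<Rightarrow> nat \<Rightarrow> rat" where
  "signed_moment p n = (1 / fact n) *
     (\<Sum>\<sigma>\<in>{\<sigma>. \<sigma> permutes {0..<n}}. of_int (sign \<sigma>) * p (cycle_count \<sigma> n))"

text \<open>Q[[u,v,z]] realised as ((Q[[u]])[[v]])[[z]].\<close>
definition fu :: "rat fps fps fps" where "fu = fps_const (fps_const fps_X)"
definition fv :: "rat fps fps fps" where "fv = fps_const fps_X"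
definition fz :: "rat fps fps fps" where "fz = fps_X"

end

theory Submission
  imports Defs "HOL-Combinatorics.Cycles" "HOL-Combinatorics.Orbits"
begin

unbundle fps_syntax

text \<open>
  For a permutation \<sigma> of a finite set A, E_k evaluated at the cycle type of \<sigma> is the trace of
  \<sigma> on the k-th exterior power of the permutation representation: the count of \<sigma>-invariant
  k-subsets S, each weighted by the sign of \<sigma> on S. Removing one cycle at a time, this reduces
  to the recurrence E_k(X + e_m) = E_k(X) + (-1)^(m-1) E_(k-m)(X) for one more m-cycle.

  Hence n! {E_k E_l}_n is a signed count of triples (\<sigma>, S, T). Refining it by i = |S \<inter> T| and
  writing the permutations of A \<union> {a} as (a b) \<circ> \<sigma> with \<sigma> a permutation of A gives a
  first-order recursion in n, solved by n! times the indicator that S \<inter> T and the complement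
  of S \<union> T have at most one element each. Summing over i \<in> {0, 1} leaves four indicators,
  the coefficients of (1 + z)(1 + uvz) / ((1 - uz)(1 - vz)).
\<close>

section \<open>A recurrence for the character polynomials\<close>

lemma partition_mults_support:
  "a \<in> partition_mults k \<Longrightarrow> a i \<noteq> 0 \<Longrightarrow> 1 \<le> i \<and> i \<le> k"
  by (simp add: partition_mults_def)

lemma partition_mults_size: "a \<in> partition_mults k \<Longrightarrow> (\<Sum>i=1..k. i * a i) = k"
  by (simp add: partition_mults_def)

lemma partition_mults_bounded:
  assumes a: "a \<in> partition_mults k"
  shows "a i \<le> k"
proof (cases "a i = 0")
  case False
  then have i: "i \<in> {1..k}" using partition_mults_support[OF a] by auto
  have "a i \<le> i * a i" using i by simp
  also have "\<dots> \<le> (\<Sum>j=1..k. j * a j)" using i by (intro member_le_sum) auto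
  finally show ?thesis using partition_mults_size[OF a] by simp
qed simp

lemma finite_partition_mults: "finite (partition_mults k)"
proof (rule finite_subset)
  show "partition_mults k \<subseteq> {a. \<forall>i. (i \<in> {1..k} \<longrightarrow> a i \<in> {0..k}) \<and> (i \<notin> {1..k} \<longrightarrow> a i = 0)}"
    using partition_mults_support partition_mults_bounded by fastforce
qed (rule finite_set_of_finite_funs; simp)

lemma num_parts_le:
  assumes "a \<in> partition_mults k"
  shows "num_parts k a \<le> k"
proof -
  have "(\<Sum>i=1..k. a i) \<le> (\<Sum>i=1..k. i * a i)" by (intro sum_mono) simp
  with partition_mults_size[OF assms] show ?thesis by (simp add: num_parts_def)
qed

lemma sum_shrink_support:
  fixes f :: "nat \<Rightarrow> nat \<Rightarrow> 'b::comm_monoid_add"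
  assumes "\<And>i. a i \<noteq> 0 \<Longrightarrow> i \<le> L" "L \<le> L'" "\<And>i. f i 0 = 0"
  shows "(\<Sum>i=1..L'. f i (a i)) = (\<Sum>i=1..L. f i (a i))"
proof (rule sum.mono_neutral_right)
  show "\<forall>i\<in>{1..L'} - {1..L}. f i (a i) = 0"
    using assms(1,3) by (metis Diff_iff atLeastAtMost_iff)
qed (use assms(2) in auto)

lemma prod_shrink_support:
  fixes f :: "nat \<Rightarrow> nat \<Rightarrow> 'b::comm_monoid_mult"
  assumes "\<And>i. a i \<noteq> 0 \<Longrightarrow> i \<le> L" "L \<le> L'" "\<And>i. f i 0 = 1"
  shows "(\<Prod>i=1..L'. f i (a i)) = (\<Prod>i=1..L. f i (a i))"
proof (rule prod.mono_neutral_right)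
  show "\<forall>i\<in>{1..L'} - {1..L}. f i (a i) = 1"
    using assms(1,3) by (metis Diff_iff atLeastAtMost_iff)
qed (use assms(2) in auto)

lemma charE_zero: "charE k (\<lambda>_. 0) = (if k = 0 then 1 else 0)"
proof (cases "k = 0")
  case True
  have "partition_mults 0 = {\<lambda>_. 0}"
    by (auto simp: partition_mults_def)
  then show ?thesis using True by (simp add: charE_def num_parts_def)
next
  case False
  have "(\<Prod>i=1..k. of_nat (0 choose a i) :: rat) = 0" if a: "a \<in> partition_mults k" for a
  proof -
    have "\<exists>i\<in>{1..k}. a i \<noteq> 0"
    proof (rule ccontr)
      assume "\<not> ?thesis"
      then have "(\<Sum>i=1..k. i * a i) = 0" by auto
      with partition_mults_size[OF a] False show False by simp
    qed
    then show ?thesis by (auto intro: prod_zero)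
  qed
  then have "charE k (\<lambda>_. 0) = (\<Sum>a\<in>partition_mults k. 0)"
    unfolding charE_def by (intro sum.cong) auto
  then show ?thesis using False by simp
qed

lemma sum_fun_upd_Suc:
  fixes f b :: "nat \<Rightarrow> nat"
  assumes "m \<in> {1..k}"
  shows "(\<Sum>i=1..k. f i * (b(m := Suc (b m))) i) = (\<Sum>i=1..k. f i * b i) + f m"
proof -
  have "(\<Sum>i=1..k. f i * (b(m := Suc (b m))) i) = (\<Sum>i=1..k. f i * b i + (if i = m then f m else 0))"
    by (intro sum.cong) auto
  then show ?thesis using assms by (simp add: sum.distrib)
qed

lemma add_part_in_partition_mults:
  assumes b: "b \<in> partition_mults (k - m)" and m: "1 \<le> m" "m \<le> k"
  shows "b(m := Suc (b m)) \<in> partition_mults k"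
proof -
  have "(\<Sum>i=1..k. i * b i) = (\<Sum>i=1..k-m. i * b i)"
    by (rule sum_shrink_support) (use partition_mults_support[OF b] in auto)
  then have "(\<Sum>i=1..k. i * (b(m := Suc (b m))) i) = k"
    using sum_fun_upd_Suc[of m k "\<lambda>i. i" b] partition_mults_size[OF b] m by simp
  moreover have "1 \<le> i \<and> i \<le> k" if "(b(m := Suc (b m))) i \<noteq> 0" for i
    using that partition_mults_support[OF b, of i] m by (auto split: if_splits)
  ultimately show ?thesis unfolding partition_mults_def by blast
qed

lemma remove_part_in_partition_mults:
  assumes a: "a \<in> partition_mults k" and am: "a m \<noteq> 0"
  shows "a(m := a m - 1) \<in> partition_mults (k - m)"
proof -
  define b where "b = a(m := a m - 1)"
  have m: "m \<in> {1..k}" using partition_mults_support[OF a am] by simp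
  have "(\<Sum>i=1..k. i * a i) = (\<Sum>i=1..k. i * b i) + m"
    using sum_fun_upd_Suc[OF m, of "\<lambda>i. i" b] am by (simp add: b_def)
  then have size: "(\<Sum>i=1..k. i * b i) = k - m" using partition_mults_size[OF a] by simp
  have support: "1 \<le> i \<and> i \<le> k - m" if "b i \<noteq> 0" for i
  proof -
    have i: "i \<in> {1..k}" using that partition_mults_support[OF a, of i] by (auto simp: b_def split: if_splits)
    have "i \<le> i * b i" using that by simp
    also have "\<dots> \<le> k - m" using member_le_sum[of i "{1..k}" "\<lambda>i. i * b i"] i size by simp
    finally show ?thesis using i by simp
  qed
  have "(\<Sum>i=1..k-m. i * b i) = k - m"
    using size sum_shrink_support[of b "k - m" k "\<lambda>i x. i * x"] support by simp
  with support show ?thesis unfolding partition_mults_def b_def by blast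
qed

lemma bij_betw_add_part:
  assumes "1 \<le> m" "m \<le> k"
  shows "bij_betw (\<lambda>b. b(m := Suc (b m))) (partition_mults (k - m)) {a \<in> partition_mults k. a m \<noteq> 0}"
proof (rule bij_betw_byWitness[where f' = "\<lambda>a. a(m := a m - 1)"])
  show "(\<lambda>b. b(m := Suc (b m))) ` partition_mults (k - m) \<subseteq> {a \<in> partition_mults k. a m \<noteq> 0}"
    using add_part_in_partition_mults[OF _ assms] by auto
  show "(\<lambda>a. a(m := a m - 1)) ` {a \<in> partition_mults k. a m \<noteq> 0} \<subseteq> partition_mults (k - m)"
    using remove_part_in_partition_mults by auto
qed auto

lemma prod_choose_fun_upd_Suc:
  fixes X a :: "nat \<Rightarrow> nat"
  assumes m: "m \<in> {1..k}"
  shows "(\<Prod>i=1..k. of_nat ((X(m := Suc (X m))) i choose a i) :: rat)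
    = (\<Prod>i=1..k. of_nat (X i choose a i)) +
      (if a m = 0 then 0 else \<Prod>i=1..k. of_nat (X i choose (a(m := a m - 1)) i))"
proof -
  define R where "R = (\<Prod>i\<in>{1..k}-{m}. of_nat (X i choose a i) :: rat)"
  have split: "(\<Prod>i=1..k. of_nat (Y i choose b i) :: rat) = of_nat (Y m choose b m) * R"
    if "\<forall>i. i \<noteq> m \<longrightarrow> Y i = X i \<and> b i = a i" for Y b
    unfolding R_def using that by (subst prod.remove[OF _ m]) (auto intro!: prod.cong)
  have "(\<Prod>i=1..k. of_nat ((X(m := Suc (X m))) i choose a i) :: rat) = of_nat (Suc (X m) choose a m) * R"
    by (subst split) simp_all
  moreover have "(\<Prod>i=1..k. of_nat (X i choose a i) :: rat) = of_nat (X m choose a m) * R"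
    by (rule split) simp
  moreover have "(\<Prod>i=1..k. of_nat (X i choose (a(m := a m - 1)) i) :: rat) = of_nat (X m choose (a m - 1)) * R"
    by (subst split) simp_all
  ultimately show ?thesis
    by (cases "a m") (simp_all add: distrib_right)
qed

lemma charE_term_add_part:
  assumes b: "b \<in> partition_mults (k - m)" and m: "1 \<le> m" "m \<le> k"
  shows "(-1) ^ (k - num_parts k (b(m := Suc (b m)))) * (\<Prod>i=1..k. of_nat (X i choose b i))
    = (-1::rat) ^ (m - 1) * ((-1) ^ (k - m - num_parts (k - m) b) * (\<Prod>i=1..k-m. of_nat (X i choose b i)))"
proof -
  have "num_parts k b = num_parts (k - m) b"
    unfolding num_parts_def
    by (rule sum_shrink_support[where f = "\<lambda>i x. x"]) (use partition_mults_support[OF b] in auto)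
  then have "num_parts k (b(m := Suc (b m))) = num_parts (k - m) b + 1"
    unfolding num_parts_def using sum_fun_upd_Suc[of m k "\<lambda>_. 1" b] m by simp
  then have "k - num_parts k (b(m := Suc (b m))) = (m - 1) + (k - m - num_parts (k - m) b)"
    using num_parts_le[OF b] m by simp
  moreover have "(\<Prod>i=1..k. of_nat (X i choose b i) :: rat) = (\<Prod>i=1..k-m. of_nat (X i choose b i))"
    by (rule prod_shrink_support) (use partition_mults_support[OF b] in auto)
  ultimately show ?thesis by (simp add: power_add)
qed

lemma charE_add_cycle:
  assumes m: "1 \<le> m"
  shows "charE k (X(m := Suc (X m))) = charE k X + (if m \<le> k then (-1) ^ (m - 1) * charE (k - m) X else 0)"
proof (cases "m \<le> k")
  case False
  then have "charE k (X(m := Suc (X m))) = charE k X"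
    unfolding charE_def by (intro sum.cong refl arg_cong2[where f = "(*)"] prod.cong) auto
  then show ?thesis using False by simp
next
  case True
  define \<epsilon> where "\<epsilon> a = (-1::rat) ^ (k - num_parts k a)" for a
  define F where "F a = \<epsilon> a * (\<Prod>i=1..k. of_nat (X i choose (a(m := a m - 1)) i))" for a
  have "charE k (X(m := Suc (X m))) = (\<Sum>a\<in>partition_mults k. \<epsilon> a * (\<Prod>i=1..k. of_nat (X i choose a i))
      + (if a m \<noteq> 0 then F a else 0))"
    unfolding charE_def \<epsilon>_def F_def using m True
    by (intro sum.cong refl) (subst prod_choose_fun_upd_Suc, auto simp: distrib_left)
  also have "\<dots> = charE k X + (\<Sum>a\<in>partition_mults k. if a m \<noteq> 0 then F a else 0)"
    unfolding charE_def \<epsilon>_def by (rule sum.distrib)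
  also have "(\<Sum>a\<in>partition_mults k. if a m \<noteq> 0 then F a else 0) = (\<Sum>a\<in>{a\<in>partition_mults k. a m \<noteq> 0}. F a)"
    by (rule sum.inter_filter[symmetric]) (rule finite_partition_mults)
  also have "\<dots> = (\<Sum>b\<in>partition_mults (k - m). F (b(m := Suc (b m))))"
    by (rule sum.reindex_bij_betw[symmetric, OF bij_betw_add_part[OF m True]])
  also have "\<dots> = (-1) ^ (m - 1) * charE (k - m) X"
    unfolding charE_def sum_distrib_left
  proof (intro sum.cong refl)
    fix b assume b: "b \<in> partition_mults (k - m)"
    have "(b(m := Suc (b m)))(m := (b(m := Suc (b m))) m - 1) = b" by simp
    then show "F (b(m := Suc (b m))) = (-1) ^ (m - 1) *
        ((-1) ^ (k - m - num_parts (k - m) b) * (\<Prod>i=1..k-m. of_nat (X i choose b i)))"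
      unfolding F_def \<epsilon>_def by (simp only:) (rule charE_term_add_part[OF b m True])
  qed
  finally show ?thesis using True by (simp only: if_P)
qed

section \<open>Orbits and signs of restrictions\<close>

lemma sign_cycle_of_list: "distinct cs \<Longrightarrow> sign (cycle_of_list cs) = (-1) ^ (length cs - 1)"
proof (induction cs rule: cycle_of_list.induct)
  case (1 i j cs)
  then have "sign (cycle_of_list (i # j # cs)) = sign (transpose i j) * sign (cycle_of_list (j # cs))"
    by (simp add: sign_compose permutation_swap_id permutation_of_cycle)
  also have "\<dots> = - ((-1) ^ length cs)"
    using 1 by (simp add: sign_swap_id)
  finally show ?case by (simp del: cycle_of_list.simps)
qed simp_all

lemma orbit_subset_invariant:
  assumes "\<sigma> ` S \<subseteq> S" "x \<in> S"
  shows "orbit \<sigma> x \<subseteq> S"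
proof
  fix y assume "y \<in> orbit \<sigma> x"
  then show "y \<in> S" by (induction rule: orbit.induct) (use assms in auto)
qed

lemma orbit_eq_of_mem: "permutation \<sigma> \<Longrightarrow> y \<in> orbit \<sigma> x \<Longrightarrow> orbit \<sigma> y = orbit \<sigma> x"
  by (rule orbit_cyclic_eq3[OF cyclic_on_orbit'])

lemma image_orbit:
  assumes "permutation \<sigma>"
  shows "\<sigma> ` orbit \<sigma> x = orbit \<sigma> x"
proof
  show "\<sigma> ` orbit \<sigma> x \<subseteq> orbit \<sigma> x" by (auto intro: orbit.step)
  show "orbit \<sigma> x \<subseteq> \<sigma> ` orbit \<sigma> x"
  proof
    fix y assume "y \<in> orbit \<sigma> x"
    then have "inv \<sigma> y \<in> orbit (inv \<sigma>) x" by (intro orbit.step) (simp add: orbit_inv_eq[OF assms])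
    then have "inv \<sigma> y \<in> orbit \<sigma> x" by (simp add: orbit_inv_eq[OF assms])
    moreover have "y = \<sigma> (inv \<sigma> y)"
      using assms by (simp add: permutation_bijective bij_is_surj surj_f_inv_f)
    ultimately show "y \<in> \<sigma> ` orbit \<sigma> x" by blast
  qed
qed

lemma sign_on_orbit:
  assumes "permutation \<sigma>"
  shows "sign_on (orbit \<sigma> s) \<sigma> = (-1) ^ (card (orbit \<sigma> s) - 1)"
proof -
  have set_support: "set (support \<sigma> s) = orbit \<sigma> s"
    unfolding support_set[OF assms] orbit_altdef_permutation[OF assms] by auto
  have "restrict_id \<sigma> (orbit \<sigma> s) = cycle_of_list (support \<sigma> s)"
  proof
    fix y show "restrict_id \<sigma> (orbit \<sigma> s) y = cycle_of_list (support \<sigma> s) y"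
      using cycle_restrict[OF assms, of y s] id_outside_supp[of y "support \<sigma> s"] set_support
      by (cases "y \<in> orbit \<sigma> s") simp_all
  qed
  moreover have "distinct (support \<sigma> s)" by (rule cycle_of_permutation[OF assms])
  moreover have "length (support \<sigma> s) = card (orbit \<sigma> s)"
    using distinct_card[OF calculation(2)] set_support by simp
  ultimately show ?thesis unfolding sign_on_def by (simp add: sign_cycle_of_list)
qed

lemma sign_on_Un:
  assumes "inj \<sigma>" "\<sigma> ` B = B" "\<sigma> ` C = C" "B \<inter> C = {}" "finite B" "finite C"
  shows "sign_on (B \<union> C) \<sigma> = sign_on B \<sigma> * sign_on C \<sigma>"
proof -
  have "restrict_id \<sigma> (B \<union> C) = restrict_id \<sigma> B \<circ> restrict_id \<sigma> C"
    using assms(3,4) by (force simp: fun_eq_iff restrict_id_def)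
  moreover have "permutation (restrict_id \<sigma> X)" if "\<sigma> ` X = X" "finite X" for X
    using permutes_restrict_id[of \<sigma> X] assms(1) that
    by (auto simp: bij_betw_def permutation_permutes inj_on_subset)
  ultimately show ?thesis unfolding sign_on_def using assms by (simp add: sign_compose)
qed

lemma sign_on_insert_fixpoint: "\<sigma> a = a \<Longrightarrow> sign_on (insert a S) \<sigma> = sign_on S \<sigma>"
  unfolding sign_on_def by (rule arg_cong[where f = sign]) (auto simp: restrict_id_def)

lemma sum_Un_image_disjoint:
  assumes "finite I" "inj_on h I" "I \<inter> h ` I = {}"
  shows "(\<Sum>x\<in>I \<union> h ` I. g x) = (\<Sum>x\<in>I. g x + g (h x))"
proof -
  have "(\<Sum>x\<in>I \<union> h ` I. g x) = (\<Sum>x\<in>I. g x) + (\<Sum>x\<in>h ` I. g x)"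
    by (rule sum.union_disjoint) (use assms in auto)
  also have "(\<Sum>x\<in>h ` I. g x) = (\<Sum>x\<in>I. g (h x))"
    by (rule sum.reindex_cong[OF assms(2) refl refl])
  finally show ?thesis by (simp add: sum.distrib)
qed

section \<open>Character polynomials as traces on exterior powers\<close>

definition invariant_subsets :: "('a \<Rightarrow> 'a) \<Rightarrow> 'a set \<Rightarrow> 'a set set" where
  "invariant_subsets \<sigma> A = {S. S \<subseteq> A \<and> \<sigma> ` S = S}"

definition cycle_type :: "('a \<Rightarrow> 'a) \<Rightarrow> 'a set \<Rightarrow> nat \<Rightarrow> nat" where
  "cycle_type \<sigma> A i = card {C \<in> orbit \<sigma> ` A. card C = i}"

text \<open>The trace of \<sigma> on the k-th exterior power of the permutation representation on A:
  in the basis of wedges of k-subsets only the invariant subsets S give a diagonal entry,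
  namely the sign of \<sigma> on S.\<close>

definition wedge_trace :: "('a \<Rightarrow> 'a) \<Rightarrow> 'a set \<Rightarrow> nat \<Rightarrow> int" where
  "wedge_trace \<sigma> A k = (\<Sum>S\<in>invariant_subsets \<sigma> A. if card S = k then sign_on S \<sigma> else 0)"

lemma invariant_subsetsD:
  assumes "S \<in> invariant_subsets \<sigma> A"
  shows "S \<subseteq> A" "\<sigma> ` S = S"
  using assms by (simp_all add: invariant_subsets_def)

lemma invariant_subsets_iff:
  assumes "finite A" "inj \<sigma>"
  shows "S \<in> invariant_subsets \<sigma> A \<longleftrightarrow> S \<subseteq> A \<and> (\<forall>x\<in>S. \<sigma> x \<in> S)"
proof -
  have "\<sigma> ` S = S" if "S \<subseteq> A" "\<forall>x\<in>S. \<sigma> x \<in> S"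
    using that assms by (intro endo_inj_surj) (auto intro: finite_subset inj_on_subset)
  then show ?thesis unfolding invariant_subsets_def by auto
qed

lemma finite_invariant_subsets: "finite A \<Longrightarrow> finite (invariant_subsets \<sigma> A)"
  unfolding invariant_subsets_def by (rule finite_subset[of _ "Pow A"]) auto

lemma cycle_count_eq_cycle_type:
  assumes "\<sigma> permutes {0..<n}"
  shows "cycle_count \<sigma> n = cycle_type \<sigma> {0..<n}"
proof -
  have "permutation \<sigma>" using assms by (auto simp: permutation_permutes)
  then show ?thesis
    unfolding cycle_count_def cycle_type_def orbit_altdef_permutation[OF \<open>permutation \<sigma>\<close>]
    by (intro ext arg_cong[where f = card]) auto
qed

lemma wedge_trace_empty: "wedge_trace id {} k = (if k = 0 then 1 else 0)"
  by (simp add: wedge_trace_def invariant_subsets_def)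

lemma cycle_type_empty: "cycle_type \<sigma> {} = (\<lambda>_. 0)"
  by (simp add: cycle_type_def fun_eq_iff)

locale cycle_removal =
  fixes \<sigma> :: "'a \<Rightarrow> 'a" and A :: "'a set" and s :: 'a
  assumes permutes: "\<sigma> permutes A" and finite: "finite A" and s_in: "s \<in> A"
begin

abbreviation C :: "'a set" where "C \<equiv> orbit \<sigma> s"

abbreviation \<rho> :: "'a \<Rightarrow> 'a" where "\<rho> \<equiv> restrict_id \<sigma> (A - C)"

lemma permutation: "permutation \<sigma>"
  using permutes finite permutation_permutes by blast

lemma inj: "inj \<sigma>"
  using permutes permutes_inj by blast

lemma C_subset: "C \<subseteq> A"
  by (rule permutes_orbit_subset[OF permutes s_in])

lemma image_C: "\<sigma> ` C = C"
  by (rule image_orbit[OF permutation])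

lemma s_in_C: "s \<in> C"
  by (rule permutation_self_in_orbit[OF permutation])

lemma finite_C: "finite C"
  using C_subset finite finite_subset by blast

lemma card_C_pos: "1 \<le> card C"
  using finite_C s_in_C by (metis One_nat_def Suc_leI card_gt_0_iff empty_iff)

lemma image_rest: "\<sigma> ` (A - C) = A - C"
  using inj image_C permutes_image[OF permutes] by (simp add: image_set_diff)

lemma \<rho>_permutes: "\<rho> permutes (A - C)"
  by (rule permutes_restrict_id)
     (use image_rest inj in \<open>auto simp: bij_betw_def intro: inj_on_subset[of _ UNIV]\<close>)

lemma card_rest_less: "card (A - C) < card A"
  by (intro psubset_card_mono finite) (use s_in_C s_in in blast)

lemma orbit_\<rho>: "x \<in> A - C \<Longrightarrow> orbit \<rho> x = orbit \<sigma> x"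
  by (rule orbit_cong0[where A = "A - C"]) (use image_rest in auto)

lemma orbits_removal: "orbit \<sigma> ` A = insert C (orbit \<rho> ` (A - C))"
proof -
  have "orbit \<sigma> ` A = orbit \<sigma> ` C \<union> orbit \<sigma> ` (A - C)"
    using C_subset by blast
  also have "orbit \<sigma> ` C = (\<lambda>_. C) ` C"
    by (rule image_cong[OF refl orbit_eq_of_mem[OF permutation]])
  also have "\<dots> = {C}"
    by (rule image_constant[OF s_in_C])
  also have "orbit \<sigma> ` (A - C) = orbit \<rho> ` (A - C)"
    by (rule image_cong[OF refl orbit_\<rho>[symmetric]])
  finally show ?thesis by simp
qed

lemma C_notin_orbits_rest: "C \<notin> orbit \<rho> ` (A - C)"
proof
  assume "C \<in> orbit \<rho> ` (A - C)"
  then obtain x where x: "x \<in> A - C" "C = orbit \<rho> x" by blast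
  then have "x \<in> C" using orbit_\<rho> permutation_self_in_orbit[OF permutation, of x] by simp
  with x show False by simp
qed

lemma cycle_type_removal:
  "cycle_type \<sigma> A = (cycle_type \<rho> (A - C))(card C := Suc (cycle_type \<rho> (A - C) (card C)))"
proof
  fix i
  have "finite (orbit \<rho> ` (A - C))" using finite by simp
  then show "cycle_type \<sigma> A i = ((cycle_type \<rho> (A - C))(card C := Suc (cycle_type \<rho> (A - C) (card C)))) i"
    unfolding cycle_type_def orbits_removal using C_notin_orbits_rest
    by (cases "card C = i") (auto simp: insert_compr[symmetric] Collect_conj_eq)
qed

lemma image_\<rho>: "T \<subseteq> A - C \<Longrightarrow> \<rho> ` T = \<sigma> ` T"
  by (rule image_cong[OF refl]) auto

lemma invariant_subsets_removal:
  "invariant_subsets \<sigma> A = invariant_subsets \<rho> (A - C) \<union> (\<lambda>T. T \<union> C) ` invariant_subsets \<rho> (A - C)"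
proof
  show "invariant_subsets \<sigma> A \<subseteq> invariant_subsets \<rho> (A - C) \<union> (\<lambda>T. T \<union> C) ` invariant_subsets \<rho> (A - C)"
  proof
    fix S assume "S \<in> invariant_subsets \<sigma> A"
    then have S: "S \<subseteq> A" "\<sigma> ` S = S" unfolding invariant_subsets_def by auto
    have "S - C \<in> invariant_subsets \<rho> (A - C)"
      using S image_C inj image_\<rho>[of "S - C"] by (auto simp: invariant_subsets_def image_set_diff)
    moreover have "S = S - C \<or> S = (S - C) \<union> C"
    proof (cases "S \<inter> C = {}")
      case False
      then obtain x where "x \<in> S" "x \<in> C" by blast
      then have "C \<subseteq> S"
        using orbit_subset_invariant[of \<sigma> S x] S orbit_eq_of_mem[OF permutation] by auto
      then show ?thesis by blast
    qed blast
    ultimately show "S \<in> invariant_subsets \<rho> (A - C) \<union> (\<lambda>T. T \<union> C) ` invariant_subsets \<rho> (A - C)"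
      by (metis UnCI image_eqI)
  qed
  show "invariant_subsets \<rho> (A - C) \<union> (\<lambda>T. T \<union> C) ` invariant_subsets \<rho> (A - C) \<subseteq> invariant_subsets \<sigma> A"
    using image_\<rho> image_C C_subset by (auto simp: invariant_subsets_def image_Un)
qed

lemma sign_on_\<rho>: "T \<in> invariant_subsets \<rho> (A - C) \<Longrightarrow> sign_on T \<sigma> = sign_on T \<rho>"
  unfolding invariant_subsets_def by (intro sign_on_cong) auto

lemma sign_on_Un_C:
  assumes "T \<in> invariant_subsets \<rho> (A - C)"
  shows "sign_on (T \<union> C) \<sigma> = (-1) ^ (card C - 1) * sign_on T \<rho>"
proof -
  have T: "T \<subseteq> A - C" "\<sigma> ` T = T"
    using assms image_\<rho> unfolding invariant_subsets_def by auto
  have "sign_on (T \<union> C) \<sigma> = sign_on T \<sigma> * sign_on C \<sigma>"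
    by (rule sign_on_Un[OF inj T(2) image_C]) (use T finite finite_C in \<open>auto intro: finite_subset\<close>)
  then show ?thesis using sign_on_\<rho>[OF assms] sign_on_orbit[OF permutation, of s] by simp
qed

lemma wedge_trace_removal:
  "wedge_trace \<sigma> A k = wedge_trace \<rho> (A - C) k
     + (if card C \<le> k then (-1) ^ (card C - 1) * wedge_trace \<rho> (A - C) (k - card C) else 0)"
proof -
  define I where "I = invariant_subsets \<rho> (A - C)"
  have finite_I: "finite I" unfolding I_def by (rule finite_invariant_subsets) (use finite in simp)
  have disjoint: "T \<inter> C = {}" and finite_T: "finite T" if "T \<in> I" for T
    using that finite unfolding I_def invariant_subsets_def by (auto intro: finite_subset)
  have "inj_on (\<lambda>T. T \<union> C) I" using disjoint by (intro inj_onI) blast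
  moreover have "I \<inter> (\<lambda>T. T \<union> C) ` I = {}" using disjoint s_in_C by blast
  ultimately have "wedge_trace \<sigma> A k = (\<Sum>T\<in>I. (if card T = k then sign_on T \<sigma> else 0)
      + (if card (T \<union> C) = k then sign_on (T \<union> C) \<sigma> else 0))"
    unfolding wedge_trace_def invariant_subsets_removal I_def[symmetric]
    by (rule sum_Un_image_disjoint[OF finite_I])
  also have "\<dots> = wedge_trace \<rho> (A - C) k
      + (-1) ^ (card C - 1) * (\<Sum>T\<in>I. if card T + card C = k then sign_on T \<rho> else 0)"
    unfolding wedge_trace_def I_def[symmetric] sum.distrib sum_distrib_left
    using disjoint finite_T finite_C
    by (intro arg_cong2[where f = "(+)"] sum.cong refl) (auto simp: sign_on_\<rho> sign_on_Un_C I_def card_Un_disjoint)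
  also have "(\<Sum>T\<in>I. if card T + card C = k then sign_on T \<rho> else 0)
      = (if card C \<le> k then wedge_trace \<rho> (A - C) (k - card C) else 0)"
    unfolding wedge_trace_def I_def[symmetric] by (cases "card C \<le> k") (auto intro!: sum.cong sum.neutral)
  finally show ?thesis by simp
qed

end

theorem charE_cycle_type:
  assumes "finite A" "\<sigma> permutes A"
  shows "charE k (cycle_type \<sigma> A) = of_int (wedge_trace \<sigma> A k)"
  using assms
proof (induction "card A" arbitrary: A \<sigma> k rule: less_induct)
  case less
  show ?case
  proof (cases "A = {}")
    case True
    then have "\<sigma> = id" using less.prems by simp
    then show ?thesis using True by (simp add: cycle_type_empty charE_zero wedge_trace_empty)
  next
    case False
    then obtain s where "s \<in> A" by blast
    then interpret cycle_removal \<sigma> A s using less.prems by unfold_locales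
    have IH: "charE j (cycle_type \<rho> (A - C)) = of_int (wedge_trace \<rho> (A - C) j)" for j
      using less.hyps[OF card_rest_less] \<rho>_permutes less.prems(1) by blast
    show ?thesis
      unfolding cycle_type_removal charE_add_cycle[OF card_C_pos] wedge_trace_removal IH by simp
  qed
qed

section \<open>Signed counts of pairs of invariant subsets\<close>

definition pair_weight :: "('a \<Rightarrow> 'a) \<Rightarrow> 'a set \<Rightarrow> 'a set \<Rightarrow> int" where
  "pair_weight \<sigma> S T = sign \<sigma> * sign_on S \<sigma> * sign_on T \<sigma>"

type_synonym triple_fun = "int \<Rightarrow> int \<Rightarrow> int \<Rightarrow> int"

definition pair_sum :: "('a \<Rightarrow> 'a) \<Rightarrow> 'a set \<Rightarrow> triple_fun \<Rightarrow> int" where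
  "pair_sum \<sigma> A f = (\<Sum>S\<in>invariant_subsets \<sigma> A. \<Sum>T\<in>invariant_subsets \<sigma> A.
      pair_weight \<sigma> S T * f (card S) (card T) (card (S \<inter> T)))"

lemma pair_sum_add: "pair_sum \<sigma> A f + pair_sum \<sigma> A g = pair_sum \<sigma> A (\<lambda>s t r. f s t r + g s t r)"
  by (simp add: pair_sum_def distrib_left sum.distrib)

definition transposed_term :: "triple_fun \<Rightarrow> bool \<Rightarrow> bool \<Rightarrow> triple_fun" where
  "transposed_term f p q s t r =
     - (if p then -1 else 1) * (if q then -1 else 1) * f (s + of_bool p) (t + of_bool q) (r + of_bool (p \<and> q))"

text \<open>Adjoining a point a and summing over the permutations (a b) \<circ> \<sigma>: the term b = a
  contributes the four shifts with coefficient 1, and the b \<in> A are counted according to their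
  membership in S and T.\<close>

definition insertion_operator :: "int \<Rightarrow> triple_fun \<Rightarrow> triple_fun" where
  "insertion_operator n f s t r = (1 - (n - s - t + r)) * f s t r + (1 + s - r) * f (s + 1) t r
     + (1 + t - r) * f s (t + 1) r + (1 - r) * f (s + 1) (t + 1) (r + 1)"

lemma insertion_operator_eq:
  "insertion_operator n f s t r = f s t r + f (s + 1) t r + f s (t + 1) r + f (s + 1) (t + 1) (r + 1)
     + ((n - s - t + r) * transposed_term f False False s t r + (s - r) * transposed_term f True False s t r
        + (t - r) * transposed_term f False True s t r + r * transposed_term f True True s t r)"
  by (simp add: insertion_operator_def transposed_term_def algebra_simps)

lemma sum_membership_pattern:
  fixes g :: "bool \<Rightarrow> bool \<Rightarrow> int"
  assumes "finite A" "S \<subseteq> A" "T \<subseteq> A"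
  shows "(\<Sum>b\<in>A. g (b \<in> S) (b \<in> T)) =
     (int (card A) - card S - card T + card (S \<inter> T)) * g False False
   + (int (card S) - card (S \<inter> T)) * g True False
   + (int (card T) - card (S \<inter> T)) * g False True
   + card (S \<inter> T) * g True True"
proof -
  have fin: "finite S" "finite T" using assms finite_subset by auto
  have parts: "A = (A - (S \<union> T)) \<union> ((S - T) \<union> ((T - S) \<union> (S \<inter> T)))" using assms by blast
  have "(\<Sum>b\<in>A. g (b \<in> S) (b \<in> T)) = (\<Sum>b\<in>A - (S \<union> T). g (b \<in> S) (b \<in> T))
      + ((\<Sum>b\<in>S - T. g (b \<in> S) (b \<in> T))
      + ((\<Sum>b\<in>T - S. g (b \<in> S) (b \<in> T)) + (\<Sum>b\<in>S \<inter> T. g (b \<in> S) (b \<in> T))))"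
    using assms fin by (subst parts) (subst sum.union_disjoint; auto)+
  also have "\<dots> = card (A - (S \<union> T)) * g False False + (card (S - T) * g True False
      + (card (T - S) * g False True + card (S \<inter> T) * g True True))"
    by simp
  also have "int (card (A - (S \<union> T))) = int (card A) - card S - card T + card (S \<inter> T)"
  proof -
    have "card (A - (S \<union> T)) = card A - card (S \<union> T)" using assms fin by (intro card_Diff_subset) auto
    moreover have "card (S \<union> T) \<le> card A" using assms by (intro card_mono) auto
    moreover have "card S + card T = card (S \<union> T) + card (S \<inter> T)" using fin by (rule card_Un_Int)
    ultimately show ?thesis by linarith
  qed
  also have "int (card (S - T)) = int (card S) - card (S \<inter> T)"
    using card_Diff_subset_Int[of S T] card_mono[of S "S \<inter> T"] fin by auto
  also have "int (card (T - S)) = int (card T) - card (S \<inter> T)"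
    using card_Diff_subset_Int[of T S] card_mono[of T "T \<inter> S"] fin by (auto simp: Int_commute)
  finally show ?thesis by (simp add: algebra_simps)
qed

locale point_insertion =
  fixes \<sigma> :: "'a \<Rightarrow> 'a" and A :: "'a set" and a :: 'a
  assumes permutes: "\<sigma> permutes A" and finite: "finite A" and fresh: "a \<notin> A"
begin

abbreviation I :: "'a set set" where "I \<equiv> invariant_subsets \<sigma> A"

lemma fixes_a: "\<sigma> a = a"
  using permutes fresh permutes_not_in by metis

lemma inj: "inj \<sigma>"
  using permutes permutes_inj by blast

lemma eq_a_iff: "\<sigma> x = a \<longleftrightarrow> x = a"
  using inj fixes_a by (metis injD)

lemma sign_on_insert_a: "sign_on (insert a S) \<sigma> = sign_on S \<sigma>"
  by (rule sign_on_insert_fixpoint) (rule fixes_a)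

lemma finite_I: "finite I"
  by (rule finite_invariant_subsets[OF finite])

lemma I_memD:
  assumes "S \<in> I"
  shows "S \<subseteq> A" "a \<notin> S" "finite S" "\<And>x. x \<in> S \<Longrightarrow> \<sigma> x \<in> S"
  using assms fresh finite invariant_subsets_iff[OF finite inj] by (auto intro: finite_subset)

lemma invariant_subsets_insert: "invariant_subsets \<sigma> (insert a A) = I \<union> insert a ` I"
proof -
  have "S \<in> invariant_subsets \<sigma> (insert a A) \<longleftrightarrow> S - {a} \<in> I" for S
    using fresh by (auto simp: invariant_subsets_iff[OF _ inj] finite eq_a_iff) (metis DiffI fixes_a singleton_iff)
  moreover have "S \<in> I \<union> insert a ` I \<longleftrightarrow> S - {a} \<in> I" for S
  proof
    show "S - {a} \<in> I \<Longrightarrow> S \<in> I \<union> insert a ` I"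
      by (cases "a \<in> S") (auto simp: insert_absorb image_iff intro: exI[of _ "S - {a}"])
  next
    assume "S \<in> I \<union> insert a ` I"
    then obtain T where T: "T \<in> I" "S = T \<or> S = insert a T" by blast
    moreover have "T - {a} = T" "insert a T - {a} = T" using I_memD(2)[OF T(1)] by auto
    ultimately show "S - {a} \<in> I" by metis
  qed
  ultimately show ?thesis by blast
qed

lemma pair_sum_insert_fixed:
  "pair_sum \<sigma> (insert a A) f
     = pair_sum \<sigma> A (\<lambda>s t r. f s t r + f (s + 1) t r + f s (t + 1) r + f (s + 1) (t + 1) (r + 1))"
proof -
  have "inj_on (insert a) I" using I_memD(2) by (intro inj_onI) (metis insert_ident)
  moreover have "I \<inter> insert a ` I = {}" using I_memD(2) by auto
  moreover have "pair_weight \<sigma> (insert a S) T = pair_weight \<sigma> S T"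
      "pair_weight \<sigma> S (insert a T) = pair_weight \<sigma> S T" for S T
    by (simp_all add: pair_weight_def sign_on_insert_a)
  moreover have "card (insert a S) = card S + 1" "insert a S \<inter> T = S \<inter> T" "S \<inter> insert a T = S \<inter> T"
      "card (insert a S \<inter> insert a T) = card (S \<inter> T) + 1" if "S \<in> I" "T \<in> I" for S T
    using I_memD[OF that(1)] I_memD[OF that(2)] by auto
  ultimately show ?thesis
    unfolding pair_sum_def invariant_subsets_insert
    by (simp add: sum_Un_image_disjoint[OF finite_I] sum.distrib algebra_simps cong: sum.cong)
qed

context
  fixes b :: 'a
  assumes b_in: "b \<in> A"
begin

text \<open>(a b) \<circ> \<sigma> inserts a into the cycle of \<sigma> through b, just before b; so its invariant
  subsets are those of \<sigma>, with a attached to the ones that contain b.\<close>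

abbreviation \<sigma>' :: "'a \<Rightarrow> 'a" where "\<sigma>' \<equiv> transpose a b \<circ> \<sigma>"

abbreviation attach :: "'a set \<Rightarrow> 'a set" where "attach S \<equiv> if b \<in> S then insert a S else S"

lemma a_ne_b: "a \<noteq> b"
  using b_in fresh by blast

lemma \<sigma>'_apply: "\<sigma>' x = (if x = a then b else if \<sigma> x = b then a else \<sigma> x)"
  using eq_a_iff fixes_a by (auto simp: transpose_def)

lemma inj_\<sigma>': "inj \<sigma>'"
  using inj by (simp add: inj_compose)

lemma attach_in_invariant_subsets:
  assumes S: "S \<in> I"
  shows "attach S \<in> invariant_subsets \<sigma>' (insert a A)"
proof -
  have "finite (insert a A)" using finite by simp
  moreover have "\<forall>x\<in>attach S. \<sigma>' x \<in> attach S"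
    using I_memD[OF S] by (auto simp: \<sigma>'_apply simp del: comp_apply)
  moreover have "attach S \<subseteq> insert a A" using I_memD(1)[OF S] by auto
  ultimately show ?thesis by (simp add: invariant_subsets_iff[OF _ inj_\<sigma>'])
qed

lemma invariant_subsets_transpose: "invariant_subsets \<sigma>' (insert a A) = attach ` I"
proof (intro set_eqI iffI)
  fix S' assume S': "S' \<in> invariant_subsets \<sigma>' (insert a A)"
  have "finite (insert a A)" using finite by simp
  note closure = iffD1[OF invariant_subsets_iff[OF this inj_\<sigma>'] S']
  have "S' \<subseteq> insert a A" using closure by (rule conjunct1)
  have closed: "\<sigma>' x \<in> S'" if "x \<in> S'" for x using bspec[OF conjunct2[OF closure] that] .
  have b_iff_a: "b \<in> S' \<longleftrightarrow> a \<in> S'"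
  proof
    assume "b \<in> S'"
    with invariant_subsetsD(2)[OF S'] have "b \<in> \<sigma>' ` S'" by simp
    then obtain x where "b = \<sigma>' x" "x \<in> S'" by (rule imageE)
    then show "a \<in> S'" using \<sigma>'_apply[of x] a_ne_b by metis
  next
    assume "a \<in> S'"
    then show "b \<in> S'" using closed[of a] \<sigma>'_apply[of a] by simp
  qed
  moreover have "S' - {a} \<in> I"
  proof -
    have "\<sigma> x \<in> S' - {a}" if x: "x \<in> S' - {a}" for x
    proof (cases "\<sigma> x = b")
      case True
      then have "a \<in> S'" using closed[of x] \<sigma>'_apply[of x] x by auto
      then show ?thesis using True b_iff_a a_ne_b by simp
    next
      case False
      then show ?thesis using closed[of x] \<sigma>'_apply[of x] x eq_a_iff by auto
    qed
    then show ?thesis using \<open>S' \<subseteq> insert a A\<close> by (auto simp: invariant_subsets_iff[OF finite inj])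
  qed
  ultimately show "S' \<in> attach ` I"
    using a_ne_b by (intro image_eqI[of _ _ "S' - {a}"]) auto
next
  fix S' assume "S' \<in> attach ` I"
  then obtain S where "S' = attach S" "S \<in> I" by (rule imageE)
  then show "S' \<in> invariant_subsets \<sigma>' (insert a A)" by (simp only: attach_in_invariant_subsets)
qed

lemma sign_\<sigma>': "sign \<sigma>' = - sign \<sigma>"
proof -
  have "permutation \<sigma>" using permutes finite permutation_permutes by blast
  then show ?thesis by (simp add: sign_compose permutation_swap_id sign_swap_id a_ne_b)
qed

lemma sign_on_attach:
  assumes S: "S \<in> I"
  shows "sign_on (attach S) \<sigma>' = (if b \<in> S then -1 else 1) * sign_on S \<sigma>"
proof (cases "b \<in> S")
  case True
  have "\<sigma> ` insert a S = insert a S" using invariant_subsetsD(2)[OF S] fixes_a by auto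
  then have "bij_betw \<sigma> (insert a S) (insert a S)"
    unfolding bij_betw_def using inj_on_subset[OF inj subset_UNIV] by blast
  moreover have "bij_betw (transpose a b) (insert a S) (insert a S)"
    using True by (intro permutes_imp_bij permutes_swap_id) auto
  moreover have "finite (insert a S)" using I_memD(3)[OF S] by simp
  ultimately have "sign_on (insert a S) \<sigma>' = sign_on (insert a S) (transpose a b) * sign_on (insert a S) \<sigma>"
    by (intro sign_on_compose)
  also have "\<dots> = - sign_on S \<sigma>"
    using True a_ne_b by (simp add: sign_on_transpose sign_on_insert_a)
  finally show ?thesis using True by simp
next
  case False
  have "\<sigma>' x = \<sigma> x" if "x \<in> S" for x
    using I_memD[OF S] that False by (metis \<sigma>'_apply)
  then have "sign_on S \<sigma>' = sign_on S \<sigma>" by (rule sign_on_cong[OF refl])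
  with False show ?thesis by simp
qed

lemma pair_sum_insert_transpose:
  "pair_sum \<sigma>' (insert a A) f = (\<Sum>S\<in>I. \<Sum>T\<in>I.
      pair_weight \<sigma> S T * transposed_term f (b \<in> S) (b \<in> T) (card S) (card T) (card (S \<inter> T)))"
proof -
  have "inj_on attach I"
    by (rule inj_on_inverseI[where g = "\<lambda>S. S - {a}"]) (auto dest: I_memD(2))
  then have "pair_sum \<sigma>' (insert a A) f = (\<Sum>S\<in>I. \<Sum>T\<in>I. pair_weight \<sigma>' (attach S) (attach T)
      * f (card (attach S)) (card (attach T)) (card (attach S \<inter> attach T)))"
    unfolding pair_sum_def invariant_subsets_transpose by (simp only: sum.reindex o_def)
  also have "\<dots> = (\<Sum>S\<in>I. \<Sum>T\<in>I.
      pair_weight \<sigma> S T * transposed_term f (b \<in> S) (b \<in> T) (card S) (card T) (card (S \<inter> T)))"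
  proof (intro sum.cong refl)
    fix S T assume S: "S \<in> I" and T: "T \<in> I"
    have "int (card (attach S)) = int (card S) + of_bool (b \<in> S)"
      "int (card (attach T)) = int (card T) + of_bool (b \<in> T)"
      "int (card (attach S \<inter> attach T)) = int (card (S \<inter> T)) + of_bool (b \<in> S \<and> b \<in> T)"
      using I_memD[OF S] I_memD[OF T] by (auto simp: insert_absorb)
    then show "pair_weight \<sigma>' (attach S) (attach T) * f (card (attach S)) (card (attach T)) (card (attach S \<inter> attach T))
        = pair_weight \<sigma> S T * transposed_term f (b \<in> S) (b \<in> T) (card S) (card T) (card (S \<inter> T))"
      unfolding pair_weight_def sign_\<sigma>' sign_on_attach[OF S] sign_on_attach[OF T] transposed_term_def
      by (simp add: algebra_simps)
  qed
  finally show ?thesis .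
qed

end

lemma sum_pair_sum_insert:
  "(\<Sum>b\<in>insert a A. pair_sum (transpose a b \<circ> \<sigma>) (insert a A) f) = pair_sum \<sigma> A (insertion_operator (card A) f)"
proof -
  have "(\<Sum>b\<in>insert a A. pair_sum (transpose a b \<circ> \<sigma>) (insert a A) f)
      = pair_sum \<sigma> (insert a A) f + (\<Sum>b\<in>A. pair_sum (transpose a b \<circ> \<sigma>) (insert a A) f)"
    using finite fresh by simp
  also have "(\<Sum>b\<in>A. pair_sum (transpose a b \<circ> \<sigma>) (insert a A) f) = (\<Sum>b\<in>A. \<Sum>S\<in>I. \<Sum>T\<in>I.
      pair_weight \<sigma> S T * transposed_term f (b \<in> S) (b \<in> T) (card S) (card T) (card (S \<inter> T)))"
    by (intro sum.cong refl pair_sum_insert_transpose)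
  also have "\<dots> = (\<Sum>S\<in>I. \<Sum>T\<in>I. \<Sum>b\<in>A.
      pair_weight \<sigma> S T * transposed_term f (b \<in> S) (b \<in> T) (card S) (card T) (card (S \<inter> T)))"
    by (subst sum.swap) (subst (2) sum.swap, rule refl)
  also have "\<dots> = (\<Sum>S\<in>I. \<Sum>T\<in>I. pair_weight \<sigma> S T *
      (\<Sum>b\<in>A. transposed_term f (b \<in> S) (b \<in> T) (card S) (card T) (card (S \<inter> T))))"
    by (simp add: sum_distrib_left)
  also have "\<dots> = pair_sum \<sigma> A (\<lambda>s t r. (int (card A) - s - t + r) * transposed_term f False False s t r
      + (s - r) * transposed_term f True False s t r + (t - r) * transposed_term f False True s t r
      + r * transposed_term f True True s t r)"
    unfolding pair_sum_def
    by (intro sum.cong refl arg_cong2[where f = "(*)"] sum_membership_pattern[OF finite] I_memD(1))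
  finally show ?thesis
    unfolding pair_sum_insert_fixed pair_sum_add insertion_operator_eq by (simp only: add.assoc)
qed

end

definition pair_moment :: "'a set \<Rightarrow> triple_fun \<Rightarrow> int" where
  "pair_moment A f = (\<Sum>\<sigma> | \<sigma> permutes A. pair_sum \<sigma> A f)"

lemma pair_moment_empty: "pair_moment {} f = f 0 0 0"
proof -
  have "invariant_subsets (id :: 'a \<Rightarrow> 'a) {} = {{}}" by (auto simp: invariant_subsets_def)
  then show ?thesis by (simp add: pair_moment_def pair_sum_def pair_weight_def)
qed

lemma pair_moment_insert:
  assumes "finite A" "a \<notin> A"
  shows "pair_moment (insert a A) f = pair_moment A (insertion_operator (card A) f)"
proof -
  have "pair_moment (insert a A) f
      = (\<Sum>b\<in>insert a A. \<Sum>\<sigma> | \<sigma> permutes A. pair_sum (transpose a b \<circ> \<sigma>) (insert a A) f)"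
    unfolding pair_moment_def by (rule sum_over_permutations_insert[OF assms])
  also have "\<dots> = (\<Sum>\<sigma> | \<sigma> permutes A. \<Sum>b\<in>insert a A. pair_sum (transpose a b \<circ> \<sigma>) (insert a A) f)"
    by (rule sum.swap)
  also have "\<dots> = pair_moment A (insertion_operator (card A) f)"
    unfolding pair_moment_def
    by (intro sum.cong refl point_insertion.sum_pair_sum_insert) (unfold_locales, use assms in auto)
  finally show ?thesis .
qed

lemma pair_moment_add: "pair_moment A (\<lambda>s t r. f s t r + g s t r) = pair_moment A f + pair_moment A g"
  by (simp add: pair_moment_def pair_sum_add[symmetric] sum.distrib)

lemma pair_moment_cmult: "pair_moment A (\<lambda>s t r. c * f s t r) = c * pair_moment A f"
  by (simp add: pair_moment_def pair_sum_def sum_distrib_left algebra_simps)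

definition triple_indicator :: "int \<Rightarrow> int \<Rightarrow> int \<Rightarrow> triple_fun" where
  "triple_indicator k l i s t r = of_bool (s = k \<and> t = l \<and> r = i)"

lemma insertion_operator_triple_indicator:
  "insertion_operator n (triple_indicator k l i) = (\<lambda>s t r.
     (1 - (n - k - l + i)) * triple_indicator k l i s t r + (k - i) * triple_indicator (k - 1) l i s t r
     + (l - i) * triple_indicator k (l - 1) i s t r + (2 - i) * triple_indicator (k - 1) (l - 1) (i - 1) s t r)"
  by (auto simp: fun_eq_iff insertion_operator_def triple_indicator_def)

text \<open>For subsets S, T of an n-set with |S| = k, |T| = l, |S \<inter> T| = i: both S \<inter> T and the
  complement of S \<union> T, which has n - k - l + i elements, have at most one element.\<close>

definition admissible :: "int \<Rightarrow> int \<Rightarrow> int \<Rightarrow> int \<Rightarrow> bool" where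
  "admissible n k l i \<longleftrightarrow> 0 \<le> i \<and> i \<le> 1 \<and> i \<le> k \<and> i \<le> l \<and> k + l \<le> n + i \<and> n + i \<le> k + l + 1"

lemma admissible_Suc:
  assumes "0 \<le> n"
  shows "(n + 1) * of_bool (admissible (n + 1) k l i)
    = (1 - (n - k - l + i)) * of_bool (admissible n k l i) + (k - i) * of_bool (admissible n (k - 1) l i)
      + (l - i) * of_bool (admissible n k (l - 1) i) + (2 - i) * of_bool (admissible n (k - 1) (l - 1) (i - 1))"
  using assms unfolding admissible_def by (auto simp: algebra_simps)

lemma pair_moment_triple_indicator:
  assumes "finite A"
  shows "pair_moment A (triple_indicator k l i) = fact (card A) * of_bool (admissible (card A) k l i)"
  using assms
proof (induction A arbitrary: k l i rule: finite_induct)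
  case empty
  then show ?case by (auto simp: pair_moment_empty triple_indicator_def admissible_def)
next
  case (insert a A)
  define n where "n = int (card A)"
  have "pair_moment (insert a A) (triple_indicator k l i)
      = fact (card A) * ((1 - (n - k - l + i)) * of_bool (admissible n k l i)
        + (k - i) * of_bool (admissible n (k - 1) l i) + (l - i) * of_bool (admissible n k (l - 1) i)
        + (2 - i) * of_bool (admissible n (k - 1) (l - 1) (i - 1)))"
    unfolding pair_moment_insert[OF insert(1,2)] insertion_operator_triple_indicator
    by (simp only: pair_moment_add pair_moment_cmult insert.IH n_def) (simp add: algebra_simps)
  also have "\<dots> = fact (card A) * ((n + 1) * of_bool (admissible (n + 1) k l i))"
    by (subst admissible_Suc) (simp_all add: n_def)
  also have "\<dots> = fact (card (insert a A)) * of_bool (admissible (card (insert a A)) k l i)"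
    using insert(1,2) by (simp add: n_def algebra_simps)
  finally show ?case .
qed

lemma sign_mult_wedge_trace:
  assumes "finite A"
  shows "sign \<sigma> * wedge_trace \<sigma> A k * wedge_trace \<sigma> A l = pair_sum \<sigma> A (\<lambda>s t r. of_bool (s = k \<and> t = l))"
proof -
  have "sign \<sigma> * wedge_trace \<sigma> A k * wedge_trace \<sigma> A l = (\<Sum>S\<in>invariant_subsets \<sigma> A. \<Sum>T\<in>invariant_subsets \<sigma> A.
      sign \<sigma> * ((if card S = k then sign_on S \<sigma> else 0) * (if card T = l then sign_on T \<sigma> else 0)))"
    unfolding wedge_trace_def mult.assoc sum_product by (simp only: sum_distrib_left)
  also have "\<dots> = pair_sum \<sigma> A (\<lambda>s t r. of_bool (s = k \<and> t = l))"
    unfolding pair_sum_def pair_weight_def by (intro sum.cong refl) auto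
  finally show ?thesis .
qed

lemma pair_sum_split_intersection:
  assumes "finite A"
  shows "pair_sum \<sigma> A (\<lambda>s t r. of_bool (s = k \<and> t = l))
    = (\<Sum>i=0..int (card A). pair_sum \<sigma> A (triple_indicator k l i))"
proof -
  have "of_bool (int (card S) = k \<and> int (card T) = l)
      = (\<Sum>i=0..int (card A). triple_indicator k l i (card S) (card T) (card (S \<inter> T)))"
    if "S \<in> invariant_subsets \<sigma> A" for S T
  proof -
    have "card (S \<inter> T) \<le> card A"
      using that assms by (intro card_mono) (auto dest: invariant_subsetsD)
    moreover have "(\<Sum>i=0..int (card A). triple_indicator k l i (card S) (card T) (card (S \<inter> T)))
        = (\<Sum>i=0..int (card A). if i = card (S \<inter> T) then of_bool (int (card S) = k \<and> int (card T) = l) else 0)"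
      by (intro sum.cong) (auto simp: triple_indicator_def)
    ultimately show ?thesis by simp
  qed
  then have "pair_sum \<sigma> A (\<lambda>s t r. of_bool (s = k \<and> t = l)) = (\<Sum>S\<in>invariant_subsets \<sigma> A.
      \<Sum>T\<in>invariant_subsets \<sigma> A. \<Sum>i=0..int (card A).
        pair_weight \<sigma> S T * triple_indicator k l i (card S) (card T) (card (S \<inter> T)))"
    unfolding pair_sum_def by (intro sum.cong refl) (simp add: sum_distrib_left)
  then show ?thesis
    unfolding pair_sum_def
    by (simp only: sum.swap[where A = "invariant_subsets \<sigma> A" and B = "{0..int (card A)}"])
qed

theorem signed_moment_charE_mult:
  "signed_moment (\<lambda>X. charE k X * charE l X) n
     = of_bool (k + l = n) + of_bool (k + l + 1 = n)
       + of_bool (1 \<le> k \<and> 1 \<le> l \<and> k + l = n + 1) + of_bool (1 \<le> k \<and> 1 \<le> l \<and> k + l = n)"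
proof -
  define A where "A = {0..<n}"
  have A: "finite A" "card A = n" unfolding A_def by auto
  have "(\<Sum>\<sigma> | \<sigma> permutes A. of_int (sign \<sigma>) * (charE k (cycle_count \<sigma> n) * charE l (cycle_count \<sigma> n)))
      = (of_int (pair_moment A (\<lambda>s t r. of_bool (s = k \<and> t = l))) :: rat)"
    unfolding pair_moment_def of_int_sum
    by (intro sum.cong refl)
       (simp add: A_def cycle_count_eq_cycle_type charE_cycle_type sign_mult_wedge_trace[symmetric])
  also have "pair_moment A (\<lambda>s t r. of_bool (s = k \<and> t = l)) = (\<Sum>i=0..int n. pair_moment A (triple_indicator k l i))"
    unfolding pair_moment_def pair_sum_split_intersection[OF A(1)] A(2) by (rule sum.swap)
  also have "\<dots> = fact n * (\<Sum>i=0..int n. of_bool (admissible n k l i))"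
    by (simp add: pair_moment_triple_indicator[OF A(1)] A(2) sum_distrib_left)
  also have "(\<Sum>i=0..int n. of_bool (admissible n k l i)) = (\<Sum>i\<in>{0, 1}. of_bool (admissible n k l i) :: int)"
    by (rule sum.mono_neutral_cong) (auto simp: admissible_def)
  also have "\<dots> = of_bool (k + l = n) + of_bool (k + l + 1 = n)
      + of_bool (1 \<le> k \<and> 1 \<le> l \<and> k + l = n + 1) + of_bool (1 \<le> k \<and> 1 \<le> l \<and> k + l = n)"
    by (auto simp: admissible_def)
  finally show ?thesis
    unfolding signed_moment_def A_def[symmetric] by simp
qed

section \<open>The generating function\<close>

lemma geometric_fps_inverse:
  fixes c :: "'a::comm_ring_1"
  shows "(1 - fps_const c * fps_X) * Abs_fps (\<lambda>n. c ^ n) = 1"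
proof (rule fps_ext)
  fix n
  have "((1 - fps_const c * fps_X) * Abs_fps (\<lambda>n. c ^ n)) $ n
      = Abs_fps (\<lambda>n. c ^ n) $ n - c * (fps_X * Abs_fps (\<lambda>n. c ^ n)) $ n"
    by (simp only: left_diff_distrib mult_1_left mult.assoc fps_sub_nth fps_mult_left_const_nth)
  also have "\<dots> = 1 $ n" by (cases n) simp_all
  finally show "((1 - fps_const c * fps_X) * Abs_fps (\<lambda>n. c ^ n)) $ n = 1 $ n" .
qed

lemma fps_inverse_eqI:
  fixes D G :: "'a::{comm_ring_1,inverse} fps"
  assumes "D $ 0 = 1" "inverse (1 :: 'a) = 1" "D * G = 1"
  shows "inverse D = G"
proof -
  have "D * inverse D = 1"
    using fps_right_inverse[of D "inverse (D $ 0)"] assms(1,2) by (simp add: fps_inverse_def)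
  have "inverse D = inverse D * (D * G)" using assms(3) by simp
  also have "\<dots> = (D * inverse D) * G" by (simp only: ac_simps)
  finally show ?thesis using \<open>D * inverse D = 1\<close> by simp
qed

definition diagonal_series :: "rat fps fps fps" where
  "diagonal_series = Abs_fps (\<lambda>n. Abs_fps (\<lambda>l. Abs_fps (\<lambda>k. of_bool (k + l = n))))"

lemma geometric_product_eq_diagonal_series:
  "Abs_fps (\<lambda>n. (fps_const fps_X :: rat fps fps) ^ n) * Abs_fps (\<lambda>n. fps_X ^ n) = diagonal_series"
proof (intro fps_ext)
  fix n l k
  have "((Abs_fps (\<lambda>n. (fps_const fps_X :: rat fps fps) ^ n) * Abs_fps (\<lambda>n. fps_X ^ n)) $ n) $ l $ k
      = (\<Sum>i=0..n. if l = n - i \<and> k = i then 1 else 0)"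
    by (subst fps_mult_nth, simp only: fps_sum_nth, intro sum.cong refl, simp)
  also have "\<dots> = of_bool (k + l = n)"
  proof (cases "k + l = n")
    case True
    then have "(\<Sum>i=0..n. if l = n - i \<and> k = i then 1 else 0) = (\<Sum>i\<in>{k}. 1 :: rat)"
      by (intro sum.mono_neutral_cong_right) auto
    then show ?thesis using True by simp
  qed (simp, intro sum.neutral, auto)
  finally show "((Abs_fps (\<lambda>n. (fps_const fps_X :: rat fps fps) ^ n) * Abs_fps (\<lambda>n. fps_X ^ n)) $ n) $ l $ k
      = diagonal_series $ n $ l $ k" by (simp add: diagonal_series_def)
qed

lemma inverse_denominator_eq_diagonal_series: "inverse ((1 - fu * fz) * (1 - fv * fz)) = diagonal_series"
proof (rule fps_inverse_eqI)
  have i1: "inverse (1 :: rat fps fps) = 1" by (rule fps_inverse_one') simp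
  then show "inverse (1 :: rat fps fps) = 1" .
  show "((1 - fu * fz) * (1 - fv * fz)) $ 0 = 1" by (simp add: fu_def fv_def fz_def)
  define Gu :: "rat fps fps fps" where "Gu = Abs_fps (\<lambda>n. fps_const fps_X ^ n)"
  define Gv :: "rat fps fps fps" where "Gv = Abs_fps (\<lambda>n. fps_X ^ n)"
  have "(1 - fu * fz) * (1 - fv * fz) * diagonal_series = ((1 - fu * fz) * Gu) * ((1 - fv * fz) * Gv)"
    unfolding Gu_def Gv_def geometric_product_eq_diagonal_series[symmetric] by (simp only: ac_simps)
  also have "\<dots> = 1"
    unfolding Gu_def Gv_def fu_def fv_def fz_def by (simp only: geometric_fps_inverse mult_1_left)
  finally show "(1 - fu * fz) * (1 - fv * fz) * diagonal_series = 1" .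
qed

lemma fz_mult_nth: "(fz * H) $ n $ l $ k = (if n = 0 then 0 else H $ (n - 1) $ l $ k)"
  by (simp add: fz_def)

lemma fu_fv_mult_nth:
  "(fu * fv * H) $ n $ l $ k = (if 1 \<le> k \<and> 1 \<le> l then H $ n $ (l - 1) $ (k - 1) else 0)"
  by (simp add: fu_def fv_def mult.assoc del: fps_mult_left_const_nth) (simp add: mult.assoc Suc_le_eq)

theorem generating_function:
  "Abs_fps (\<lambda>n. Abs_fps (\<lambda>l. Abs_fps (\<lambda>k. of_bool (k + l = n) + of_bool (k + l + 1 = n)
      + of_bool (1 \<le> k \<and> 1 \<le> l \<and> k + l = n + 1) + of_bool (1 \<le> k \<and> 1 \<le> l \<and> k + l = n))))
   = (1 + fz) * (1 + fu * fv * fz) * inverse ((1 - fu * fz) * (1 - fv * fz))"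
proof (intro fps_ext)
  fix n l k
  let ?D = diagonal_series
  have "(1 + fz) * (1 + fu * fv * fz) * ?D = ?D + fz * ?D + fu * fv * (fz * ?D) + fu * fv * (fz * (fz * ?D))"
    by (simp add: algebra_simps)
  moreover have "(fz * ?D) $ n $ l $ k = of_bool (k + l + 1 = n)"
    unfolding fz_mult_nth by (auto simp: diagonal_series_def)
  moreover have "(fu * fv * (fz * ?D)) $ n $ l $ k = of_bool (1 \<le> k \<and> 1 \<le> l \<and> k + l = n + 1)"
    unfolding fu_fv_mult_nth fz_mult_nth by (auto simp: diagonal_series_def)
  moreover have "(fu * fv * (fz * (fz * ?D))) $ n $ l $ k = of_bool (1 \<le> k \<and> 1 \<le> l \<and> k + l = n)"
    unfolding fu_fv_mult_nth fz_mult_nth by (auto simp: diagonal_series_def)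
  ultimately show "Abs_fps (\<lambda>n. Abs_fps (\<lambda>l. Abs_fps (\<lambda>k. of_bool (k + l = n) + of_bool (k + l + 1 = n)
      + of_bool (1 \<le> k \<and> 1 \<le> l \<and> k + l = n + 1) + of_bool (1 \<le> k \<and> 1 \<le> l \<and> k + l = n)))) $ n $ l $ k
    = ((1 + fz) * (1 + fu * fv * fz) * inverse ((1 - fu * fz) * (1 - fv * fz))) $ n $ l $ k"
    unfolding inverse_denominator_eq_diagonal_series by (simp add: diagonal_series_def)
qed

theorem theorem3p2:
  shows "Abs_fps (\<lambda>n. Abs_fps (\<lambda>l. Abs_fps (\<lambda>k.
            signed_moment (\<lambda>X. charE k X * charE l X) n)))
         = (1 + fz) * (1 + fu * fv * fz) * inverse ((1 - fu * fz) * (1 - fv * fz))"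
  unfolding signed_moment_charE_mult by (rule generating_function)

end
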